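(* Let $\kappa$ be an ordinal of uncountable cofinality and let $Z$, $Z_Y$ be as described in the context. Suppose given, for all $\beta < \alpha$ in $[2,\kappa)$, morphisms $u^\beta_\alpha: \beta \to \alpha$ of $Z_Y$ such that $u^\gamma_\alpha = u^\beta_\alpha u^\gamma_\beta$ for all $\gamma < \beta < \alpha$ in $[2,\kappa)$. Then there exists a pair $\beta < \alpha$ in $[2,\kappa)$ such that $u^\beta_\alpha$ passes through some vertex $\gamma$ with $\gamma < \beta$.
   Context: For an ordinal $\alpha \ge 2$ let $G_\alpha$ be the free group on the set $\alpha$; for $\gamma \le \alpha$ let $D^\gamma_\alpha: G_\gamma \to G_\alpha$ be the natural inclusion. Let $Z$ be the groupoid with object set $[2,\kappa)$ generated by: the elements of $G_\alpha$ as automorphisms of the object $\alpha$; and, for each pair $\alpha \neq \beta$ in $[2,\kappa)$, a morphism $y^\beta_\alpha: \beta \to \alpha$; subject to the relations of each group $G_\alpha$ and the relations $y^\beta_\alpha \, D^{\varepsilon}_\beta(a)\, y^\alpha_\beta = D^{\varepsilon}_\alpha(a)$ for all $a \in G_\varepsilon$, $\varepsilon = \min(\alpha,\beta)$ (so $y^\alpha_\beta = (y^\beta_\alpha)^{-1}$). $Z_Y$ is the subgroupoid of $Z$ generated by the edges $y^\beta_\alpha$; every morphism of $Z_Y$ can be uniquely written as a reduced word in the generators $y^\beta_\alpha$ (i.e. $Z_Y$ is the free groupoid on the edges, with $y^\alpha_\beta$ the inverse of $y^\beta_\alpha$). A morphism of $Z_Y$ passes through a vertex $\delta$ if its reduced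 word involves a generator with source or target $\delta$; the identity $\mathrm{id}_\delta$ passes through $\delta$ and no other vertex. *)

theory Defs
  imports Main "HOL-Library.Countable_Set"
begin

text \<open>Vertices of the groupoid are the elements of a well-ordered type 'a, standing
for the ordinal interval [2,kappa).  A generator y^b_a : b -> a is encoded as the
pair (b, a) (source, target), with b \<noteq> a; its inverse y^a_b is (a, b).
A word is a list of generators in order of traversal (first applied first).\<close>

definition edge_inv :: "'a \<times> 'a \<Rightarrow> 'a \<times> 'a" where
  "edge_inv e = (snd e, fst e)"

text \<open>Well-formed composable word from s to t (a morphism s -> t of the free
groupoid on the complete graph, before reduction).\<close>
definition zy_word :: "'a \<Rightarrow> 'a \<Rightarrow> ('a \<times> 'a) list \<Rightarrow> bool" where
  "zy_word s t w \<longleftrightarrow>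
     (w = [] \<longrightarrow> s = t) \<and>
     (w \<noteq> [] \<longrightarrow> fst (hd w) = s \<and> snd (last w) = t) \<and>
     (\<forall>e\<in>set w. fst e \<noteq> snd e) \<and>
     (\<forall>i. Suc i < length w \<longrightarrow> snd (w ! i) = fst (w ! Suc i))"

definition reduced_word :: "('a \<times> 'a) list \<Rightarrow> bool" where
  "reduced_word w \<longleftrightarrow> (\<forall>i. Suc i < length w \<longrightarrow> w ! Suc i \<noteq> edge_inv (w ! i))"

text \<open>Morphisms s -> t of Z_Y, given by their unique reduced words.\<close>
definition zy_mor :: "'a \<Rightarrow> 'a \<Rightarrow> ('a \<times> 'a) list \<Rightarrow> bool" where
  "zy_mor s t w \<longleftrightarrow> zy_word s t w \<and> reduced_word w"

fun free_reduce :: "('a \<times> 'a) list \<Rightarrow> ('a \<times> 'a) list" where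
  "free_reduce [] = []"
| "free_reduce (x # xs) =
     (case free_reduce xs of
        [] \<Rightarrow> [x]
      | y # zs \<Rightarrow> (if y = edge_inv x then zs else x # y # zs))"

text \<open>Groupoid composition  v \<circ> w  (first w, then v), on reduced words.\<close>
definition zy_comp :: "('a \<times> 'a) list \<Rightarrow> ('a \<times> 'a) list \<Rightarrow> ('a \<times> 'a) list" where
  "zy_comp v w = free_reduce (w @ v)"

definition passes_through :: "'a \<Rightarrow> ('a \<times> 'a) list \<Rightarrow> 'a \<Rightarrow> bool" where
  "passes_through s w d \<longleftrightarrow>
     (w = [] \<and> d = s) \<or> (\<exists>e\<in>set w. fst e = d \<or> snd e = d)"

definition uncountable_cof :: "'a::wellorder itself \<Rightarrow> bool" where
  "uncountable_cof _ \<longleftrightarrow> (\<forall>S::'a set. countable S \<longrightarrow> (\<exists>v. \<forall>s\<in>S. s < v))"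

end

theory Submission
  imports Defs
begin

text \<open>Suppose no \<open>u\<^sup>\<beta>\<^sub>\<alpha>\<close> passes through a vertex below \<open>\<beta>\<close>, and fix a vertex \<open>c\<close>.
Using uncountable cofinality, build an increasing \<open>\<omega>\<close>-sequence above \<open>c\<close> in which each term
bounds the vertices of \<open>u\<^sup>c\<^sub>\<beta>\<close> for the preceding term \<open>\<beta>\<close>, and let \<open>\<alpha>\<close> be its supremum.
The finitely many vertices of \<open>u\<^sup>c\<^sub>\<alpha>\<close> below \<open>\<alpha>\<close> lie below some term \<open>\<beta>\<close>, while all
vertices of \<open>u\<^sup>c\<^sub>\<beta>\<close> lie below \<open>\<alpha>\<close>. Free reduction of the product of two reduced words only
cancels a suffix of one against a prefix of the other, so \<open>u\<^sup>c\<^sub>\<alpha> = u\<^sup>\<beta>\<^sub>\<alpha> u\<^sup>c\<^sub>\<beta>\<close> passes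
through a junction vertex \<open>m\<close> which is \<open>c\<close> or a vertex of \<open>u\<^sup>c\<^sub>\<beta>\<close>, and \<open>\<alpha>\<close> or a vertex of
\<open>u\<^sup>\<beta>\<^sub>\<alpha>\<close>. Then \<open>m < \<alpha>\<close>, hence \<open>m < \<beta>\<close>, and \<open>m\<close> is a vertex of \<open>u\<^sup>\<beta>\<^sub>\<alpha>\<close>, all of
which are at least \<open>\<beta>\<close>.\<close>

definition verts :: "('a \<times> 'a) list \<Rightarrow> 'a set" where
  "verts w = fst ` set w \<union> snd ` set w"

lemma verts_simps [simp]:
  "verts [] = {}"
  "verts (e # w) = insert (fst e) (insert (snd e) (verts w))"
  "verts (w @ v) = verts w \<union> verts v"
  by (auto simp: verts_def)

lemma finite_verts [simp]: "finite (verts w)"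
  by (simp add: verts_def)

lemma verts_take_subset: "verts (take i w) \<subseteq> verts w"
  using set_take_subset unfolding verts_def by fast

lemma verts_drop_subset: "verts (drop j w) \<subseteq> verts w"
  using set_drop_subset unfolding verts_def by fast

lemma passes_through_if_verts: "d \<in> verts w \<Longrightarrow> passes_through s w d"
  unfolding passes_through_def verts_def by blast

lemma reduced_word_simps [simp]:
  "reduced_word []"
  "reduced_word [x]"
  "reduced_word (x # y # w) \<longleftrightarrow> y \<noteq> edge_inv x \<and> reduced_word (y # w)"
  by (auto simp: reduced_word_def nth_Cons split: nat.splits)

lemma zy_word_simps [simp]:
  "zy_word s t [] \<longleftrightarrow> s = t"
  "zy_word s t (e # w) \<longleftrightarrow> fst e = s \<and> fst e \<noteq> snd e \<and> zy_word (snd e) t w"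
  by (auto simp: zy_word_def nth_Cons hd_conv_nth split: nat.splits)

lemma reduced_word_ConsD: "reduced_word (x # w) \<Longrightarrow> reduced_word w"
  by (cases w) auto

lemma free_reduce_reduced: "reduced_word w \<Longrightarrow> free_reduce w = w"
  by (induction w rule: induct_list012) auto

lemma free_reduce_append_reduced:
  assumes "reduced_word w" and "reduced_word v"
  shows "\<exists>i j. free_reduce (w @ v) = take i w @ drop j v"
  using assms(1)
proof (induction w)
  case Nil
  show ?case
    using free_reduce_reduced[OF \<open>reduced_word v\<close>] by (metis append_Nil drop0 take0)
next
  case (Cons x w)
  then obtain i j where IH: "free_reduce (w @ v) = take i w @ drop j v"
    using reduced_word_ConsD by blast
  show ?case
  proof (cases "take i w = []")
    case False
    then obtain a w' where w: "w = a # w'" and i: "i = Suc (i - 1)"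
      by (cases w; cases i) auto
    have "a \<noteq> edge_inv x"
      using Cons.prems w by simp
    moreover have "free_reduce (w @ v) = a # take (i - 1) w' @ drop j v"
      using IH w i by (metis append_Cons take_Suc_Cons)
    ultimately have "free_reduce ((x # w) @ v) = x # free_reduce (w @ v)"
      by simp
    also have "\<dots> = take (Suc i) (x # w) @ drop j v"
      using IH by simp
    finally show ?thesis by blast
  next
    case True
    show ?thesis
    proof (cases "drop j v")
      case Nil
      then have "free_reduce ((x # w) @ v) = take 1 (x # w) @ drop j v"
        using IH True by simp
      then show ?thesis by blast
    next
      case (Cons y zs)
      then have zs: "zs = drop (Suc j) v"
        by (metis drop_Suc list.sel(3) tl_drop)
      show ?thesis
      proof (cases "y = edge_inv x")
        case True
        then have "free_reduce ((x # w) @ v) = take 0 (x # w) @ drop (Suc j) v"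
          using IH \<open>take i w = []\<close> Cons zs by simp
        then show ?thesis by blast
      next
        case False
        then have "free_reduce ((x # w) @ v) = take 1 (x # w) @ drop j v"
          using IH \<open>take i w = []\<close> Cons by simp
        then show ?thesis by blast
      qed
    qed
  qed
qed

lemma zy_word_append:
  "zy_word s t (w @ v) \<longleftrightarrow> (\<exists>m. zy_word s m w \<and> zy_word m t v)"
  by (induction w arbitrary: s) auto

lemma zy_word_source_in_verts: "zy_word s t w \<Longrightarrow> s = t \<or> s \<in> verts w"
  by (cases w) auto

lemma zy_word_target_in_verts: "zy_word s t w \<Longrightarrow> s = t \<or> t \<in> verts w"
  by (induction w arbitrary: s) auto

lemma zy_comp_junction:
  assumes "reduced_word w" and "reduced_word v"
    and "zy_word s t (zy_comp v w)" and "s \<noteq> t"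
  shows "\<exists>m \<in> verts (zy_comp v w). (m = s \<or> m \<in> verts w) \<and> (m = t \<or> m \<in> verts v)"
proof -
  obtain i j where r: "zy_comp v w = take i w @ drop j v"
    using free_reduce_append_reduced[OF assms(1,2)] unfolding zy_comp_def by blast
  then obtain m where "zy_word s m (take i w)" and "zy_word m t (drop j v)"
    using assms(3) zy_word_append by metis
  then have "m = s \<or> m \<in> verts (take i w)" and "m = t \<or> m \<in> verts (drop j v)"
    by (auto dest: zy_word_target_in_verts zy_word_source_in_verts)
  moreover have "verts (zy_comp v w) = verts (take i w) \<union> verts (drop j v)"
    using r by simp
  ultimately show ?thesis
    using \<open>s \<noteq> t\<close> verts_take_subset[of i w] verts_drop_subset[of j v] by auto
qed

lemma uncountable_cof_chain:
  fixes c :: "'a::wellorder"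
  assumes "uncountable_cof TYPE('a)" and "\<And>x. countable (F x)"
  obtains b :: "nat \<Rightarrow> 'a"
  where "c < b 0" and "strict_mono b" and "\<And>n. F (b n) \<subseteq> {..<b (Suc n)}"
proof -
  have "\<exists>y. \<forall>s\<in>insert x (F x). s < y" for x
    using assms unfolding uncountable_cof_def by (meson countable_insert)
  then obtain next_bound where bound: "\<And>x. \<forall>s\<in>insert x (F x). s < next_bound x"
    by metis
  define b where "b n = (next_bound ^^ Suc n) c" for n
  have b_Suc: "b (Suc n) = next_bound (b n)" for n
    by (simp add: b_def)
  show thesis
  proof
    show "c < b 0"
      using bound by (simp add: b_def)
    show "strict_mono b"
      using bound by (simp add: strict_mono_Suc_iff b_Suc)
    show "F (b n) \<subseteq> {..<b (Suc n)}" for n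
      using bound by (auto simp: b_Suc)
  qed
qed

lemma strict_mono_chain_limit:
  fixes b :: "nat \<Rightarrow> 'a::wellorder"
  assumes "strict_mono b" and "\<exists>v. \<forall>n. b n < v"
  obtains \<alpha> where "\<And>n. b n < \<alpha>" and "\<And>S. finite S \<Longrightarrow> S \<subseteq> {..<\<alpha>} \<Longrightarrow> \<exists>n. S \<subseteq> {..<b n}"
proof
  define \<alpha> where "\<alpha> = (LEAST v. \<forall>n. b n < v)"
  show below: "b n < \<alpha>" for n
    using LeastI_ex[OF assms(2)] unfolding \<alpha>_def by blast
  have cofinal: "\<exists>k. x < b k" if "x < \<alpha>" for x
  proof (rule ccontr)
    assume "\<nexists>k. x < b k"
    then have "\<forall>n. b n < x"
      using \<open>strict_mono b\<close> by (metis lessI not_le order_less_le_trans strict_monoD)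
    then have "\<alpha> \<le> x"
      unfolding \<alpha>_def by (rule Least_le)
    with \<open>x < \<alpha>\<close> show False by simp
  qed
  fix S :: "'a set"
  assume "finite S" and "S \<subseteq> {..<\<alpha>}"
  have "\<forall>x\<in>S. eventually (\<lambda>n. x < b n) sequentially"
  proof
    fix x assume "x \<in> S"
    then obtain k where "x < b k"
      using cofinal \<open>S \<subseteq> {..<\<alpha>}\<close> by blast
    then show "eventually (\<lambda>n. x < b n) sequentially"
      using \<open>strict_mono b\<close>
      by (metis eventually_sequentiallyI order_less_le_trans strict_mono_less_eq)
  qed
  then have "eventually (\<lambda>n. \<forall>x\<in>S. x < b n) sequentially"
    using \<open>finite S\<close> by (rule eventually_ball_finite[rotated])
  then obtain N where "\<forall>x\<in>S. x < b N"
    unfolding eventually_sequentially by blast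
  then show "\<exists>n. S \<subseteq> {..<b n}"
    by auto
qed

lemma uncountable_cof_separating_pair:
  fixes c :: "'a::wellorder"
  assumes cof: "uncountable_cof TYPE('a)"
    and "\<And>x. countable (F x)" and "\<And>x. finite (G x)"
  obtains \<beta> \<alpha> where "c < \<beta>" and "\<beta> < \<alpha>"
    and "F \<beta> \<subseteq> {..<\<alpha>}" and "G \<alpha> \<inter> {..<\<alpha>} \<subseteq> {..<\<beta>}"
proof -
  obtain b where "c < b 0" and "strict_mono b" and F: "\<And>n. F (b n) \<subseteq> {..<b (Suc n)}"
    using uncountable_cof_chain[OF cof] assms(2) by blast
  have "countable (range b)"
    by simp
  then obtain v where "\<forall>s\<in>range b. s < v"
    using cof unfolding uncountable_cof_def by metis
  then obtain \<alpha> where b_below: "\<And>n. b n < \<alpha>"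
    and cofinal: "\<And>S. finite S \<Longrightarrow> S \<subseteq> {..<\<alpha>} \<Longrightarrow> \<exists>n. S \<subseteq> {..<b n}"
    using strict_mono_chain_limit[OF \<open>strict_mono b\<close>] by blast
  obtain n where G: "G \<alpha> \<inter> {..<\<alpha>} \<subseteq> {..<b n}"
    using cofinal[of "G \<alpha> \<inter> {..<\<alpha>}"] assms(3) by blast
  show thesis
  proof (rule that[OF _ b_below _ G])
    show "c < b n"
      using \<open>c < b 0\<close> \<open>strict_mono b\<close> by (metis le0 order_less_le_trans strict_mono_less_eq)
    show "F (b n) \<subseteq> {..<\<alpha>}"
      using F[of n] b_below[of "Suc n"] by auto
  qed
qed

theorem lemma3p13:
  fixes u :: "'a::wellorder \<Rightarrow> 'a \<Rightarrow> ('a \<times> 'a) list"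
  assumes cof: "uncountable_cof TYPE('a)"
    and mor: "\<And>\<alpha> \<beta>. \<beta> < \<alpha> \<Longrightarrow> zy_mor \<beta> \<alpha> (u \<alpha> \<beta>)"
    and coh: "\<And>\<alpha> \<beta> \<gamma>. \<gamma> < \<beta> \<Longrightarrow> \<beta> < \<alpha> \<Longrightarrow> u \<alpha> \<gamma> = zy_comp (u \<alpha> \<beta>) (u \<beta> \<gamma>)"
  shows "\<exists>\<alpha> \<beta> \<gamma>. \<beta> < \<alpha> \<and> \<gamma> < \<beta> \<and> passes_through \<beta> (u \<alpha> \<beta>) \<gamma>"
proof (rule ccontr)
  assume no_pass: "\<not> ?thesis"
  have above: "\<beta> \<le> x" if "\<beta> < \<alpha>" and "x \<in> verts (u \<alpha> \<beta>)" for \<alpha> \<beta> x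
  proof (rule ccontr)
    assume "\<not> \<beta> \<le> x"
    then have "x < \<beta> \<and> passes_through \<beta> (u \<alpha> \<beta>) x"
      using passes_through_if_verts[OF \<open>x \<in> verts (u \<alpha> \<beta>)\<close>] by simp
    with no_pass \<open>\<beta> < \<alpha>\<close> show False
      by blast
  qed
  fix c :: 'a
  obtain \<beta> \<alpha> where "c < \<beta>" and "\<beta> < \<alpha>" and w: "verts (u \<beta> c) \<subseteq> {..<\<alpha>}"
    and r: "verts (u \<alpha> c) \<inter> {..<\<alpha>} \<subseteq> {..<\<beta>}"
    by (rule uncountable_cof_separating_pair[OF cof, where F = "\<lambda>x. verts (u x c)"
          and G = "\<lambda>x. verts (u x c)"]) (simp_all add: countable_finite)
  have "c < \<alpha>"
    using \<open>c < \<beta>\<close> \<open>\<beta> < \<alpha>\<close> by simp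
  have comp: "u \<alpha> c = zy_comp (u \<alpha> \<beta>) (u \<beta> c)"
    using coh \<open>c < \<beta>\<close> \<open>\<beta> < \<alpha>\<close> by blast
  have "reduced_word (u \<beta> c)" and "reduced_word (u \<alpha> \<beta>)" and "zy_word c \<alpha> (u \<alpha> c)"
    using mor \<open>c < \<beta>\<close> \<open>\<beta> < \<alpha>\<close> \<open>c < \<alpha>\<close> unfolding zy_mor_def by blast+
  then obtain m where "m \<in> verts (u \<alpha> c)"
    and "m = c \<or> m \<in> verts (u \<beta> c)" and "m = \<alpha> \<or> m \<in> verts (u \<alpha> \<beta>)"
    using zy_comp_junction[of "u \<beta> c" "u \<alpha> \<beta>" c \<alpha>] comp \<open>c < \<alpha>\<close> by auto
  moreover have "m < \<alpha>"
    using \<open>m = c \<or> m \<in> verts (u \<beta> c)\<close> w \<open>c < \<alpha>\<close> by auto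
  ultimately have "m < \<beta>" and "\<beta> \<le> m"
    using r above[OF \<open>\<beta> < \<alpha>\<close>] by auto
  then show False
    by simp
qed

end
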